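(* Let $p\ge 7$ be a prime and $k=(p-1)/2$. Then $\mathsf{BO}(k,\mathbb{Z}/p\mathbb{Z})=k+1$ if the multiplicative order of $2$ modulo $p$ is odd, and $\mathsf{BO}(k,\mathbb{Z}/p\mathbb{Z})=k+2$ if the multiplicative order of $2$ modulo $p$ is even.
   Context: For a positive integer $k$, a set $\{g_1,\dots,g_k\}$ of $k$ distinct elements of a finite abelian group $G$ (written additively) is called $k$-barycentric if $\sum_{i=1}^k g_i = k\,g_j$ for some $1\le j\le k$. The $k$-th barycentric Olson constant $\mathsf{BO}(k,G)$ is the smallest integer $\ell$ such that every subset $A\subseteq G$ with $|A|\ge \ell$ contains a $k$-barycentric subset (so that always $\mathsf{BO}(k,G)\le |G|+1$). The multiplicative order of $2$ modulo $p$ is the least positive integer $t$ with $2^t\equiv 1 \pmod p$. *)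

theory Defs
  imports "HOL-Algebra.Algebra" "HOL-Number_Theory.Number_Theory"
begin

text \<open>A finite abelian group G is written multiplicatively here (HOL-Algebra convention);
  the group operation plays the role of the additive law of the paper.\<close>

definition barycentric :: "('a, 'b) monoid_scheme \<Rightarrow> nat \<Rightarrow> 'a set \<Rightarrow> bool" where
  "barycentric G k S \<longleftrightarrow> S \<subseteq> carrier G \<and> finite S \<and> card S = k \<and>
     (\<exists>g\<in>S. finprod G (\<lambda>x. x) S = g [^]\<^bsub>G\<^esub> k)"

definition BO :: "nat \<Rightarrow> ('a, 'b) monoid_scheme \<Rightarrow> nat" where
  "BO k G = (LEAST l. \<forall>A. A \<subseteq> carrier G \<and> card A \<ge> l \<longrightarrow>
                          (\<exists>S\<subseteq>A. barycentric G k S))"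

definition Zmod :: "int \<Rightarrow> int monoid" where
  "Zmod p = add_monoid (residue_ring p)"

end

theory Submission
  imports Defs
begin

text \<open>
  Let p = 2k + 1 be a prime with p \<ge> 7. A k-set S of residues is barycentric iff
  \<open>\<Sum>S = k g\<close> for some g in S; since 2k = -1 modulo p this reads \<open>g + 2\<Sum>S = 0\<close>.

  If a (k+1)-set A has no barycentric k-subset, then the homothety
  \<open>f(x) = 2x - 2\<Sum>A\<close> fixes \<open>u = 2\<Sum>A \<in> A\<close> and swaps \<open>A - {u}\<close> with the complement of A
  (lemma bary_free_swap). Iterating f from a point of \<open>A - {u}\<close> returns after t steps,
  t the order of 2, so t must be even; hence every (k+1)-set is good when t is odd.
  For (k+2)-sets, the swap structure of all (k+1)-subsets makes a translate of doubling
  permute A, which pins down every residue outside A -- impossible as there are \<open>k - 1 \<ge> 2\<close>.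

  If \<open>m\<^sup>s = -1\<close> and \<open>4\<^sup>s = 1\<close>, the nonzero residues whose s-th power lies in
  \<open>[1, k]\<close> form a zero-sum k-set D without barycentric k-subset (multiplication by m swaps D
  with its complement, multiplication by 4 preserves it). A primitive root with s = k gives
  the bound for odd t; for even t, m = 2 and s = t/2 allow adding 0 to D.
\<close>

section \<open>Barycentric sets in Z/pZ as congruences\<close>

lemma Zmod_carrier: "carrier (Zmod p) = {0..p-1}"
  by (simp add: Zmod_def residue_ring_def)

lemma Zmod_pow: "(g::int) [^]\<^bsub>Zmod p\<^esub> (n::nat) = (int n * g) mod p"
proof (induction n)
  case 0
  then show ?case by (simp add: Zmod_def residue_ring_def)
next
  case (Suc n)
  then show ?case by (simp add: Zmod_def residue_ring_def mod_add_right_eq algebra_simps)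
qed

lemma Zmod_finprod:
  assumes "p > 1" "finite S" "S \<subseteq> {0..p-1}"
  shows "finprod (Zmod p) (\<lambda>x. x) S = (\<Sum>S) mod p"
proof -
  interpret residues p "residue_ring p" by unfold_locales (use assms in auto)
  have "finprod (Zmod p) (\<lambda>x. x) S = (\<Oplus>\<^bsub>residue_ring p\<^esub> i\<in>S. i)"
    unfolding Zmod_def finsum_def by simp
  also have "\<dots> = (\<Oplus>\<^bsub>residue_ring p\<^esub> i\<in>S. i mod p)"
    by (rule finsum_cong') (use assms in \<open>auto simp: res_carrier_eq\<close>)
  also have "\<dots> = (\<Sum>S) mod p"
    using sum_cong[OF assms(2), of "\<lambda>x. x"] by simp
  finally show ?thesis .
qed

text \<open>For p = 2k+1 the barycentric condition \<open>\<Sum>S = k g\<close> is equivalent to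
  \<open>g + 2\<Sum>S = 0\<close>, since 2k = -1 in Z/pZ.\<close>

lemma barycentric_congruence:
  fixes p g s :: int
  assumes "p = 2 * int k + 1"
  shows "s mod p = (int k * g) mod p \<longleftrightarrow> p dvd g + 2 * s"
proof -
  have "s mod p = (int k * g) mod p \<longleftrightarrow> p dvd s - int k * g"
    by (simp add: mod_eq_dvd_iff)
  also have "\<dots> \<longleftrightarrow> p dvd g + 2 * s"
  proof
    assume "p dvd s - int k * g"
    then have "p dvd 2 * (s - int k * g) + p * g" by (metis dvd_add dvd_mult dvd_triv_left)
    also have "2 * (s - int k * g) + p * g = g + 2 * s"
      using assms by (simp add: algebra_simps)
    finally show "p dvd g + 2 * s" .
  next
    assume "p dvd g + 2 * s"
    then have "p dvd - int k * (g + 2 * s) + p * s" by (metis dvd_add dvd_mult dvd_triv_left)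
    also have "- int k * (g + 2 * s) + p * s = s - int k * g"
      using assms by (simp add: algebra_simps)
    finally show "p dvd s - int k * g" .
  qed
  finally show ?thesis .
qed

definition contains_bary :: "int \<Rightarrow> nat \<Rightarrow> int set \<Rightarrow> bool" where
  "contains_bary p k A \<longleftrightarrow> (\<exists>S\<subseteq>A. card S = k \<and> (\<exists>g\<in>S. p dvd g + 2 * \<Sum>S))"

lemma contains_bary_mono: "contains_bary p k A \<Longrightarrow> A \<subseteq> B \<Longrightarrow> contains_bary p k B"
  unfolding contains_bary_def by blast

lemma Zmod_barycentric_subset_iff:
  assumes p: "p = 2 * int k + 1" "k \<ge> 1" and A: "A \<subseteq> {0..p-1}"
  shows "(\<exists>S\<subseteq>A. barycentric (Zmod p) k S) \<longleftrightarrow> contains_bary p k A"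
proof -
  have "barycentric (Zmod p) k S \<longleftrightarrow> card S = k \<and> (\<exists>g\<in>S. p dvd g + 2 * \<Sum>S)"
    if "S \<subseteq> A" for S
  proof -
    have S: "S \<subseteq> {0..p-1}" "finite S"
      using that A by (auto intro: finite_subset[OF _ finite_atLeastAtMost_int])
    have "p > 1" using p by simp
    then show ?thesis
      unfolding barycentric_def Zmod_carrier Zmod_finprod[OF \<open>p > 1\<close> S(2,1)] Zmod_pow
      using S barycentric_congruence[OF p(1)] by auto
  qed
  then show ?thesis unfolding contains_bary_def by auto
qed

lemma BO_Zmod_eqI:
  fixes p :: int
  assumes p: "p = 2 * int k + 1" "k \<ge> 1" and "n \<ge> 1"
    and upper: "\<And>A. A \<subseteq> {0..p-1} \<Longrightarrow> card A = n \<Longrightarrow> contains_bary p k A"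
    and lower: "B \<subseteq> {0..p-1}" "card B = n - 1" "\<not> contains_bary p k B"
  shows "BO k (Zmod p) = n"
  unfolding BO_def
proof (rule Least_equality)
  show "\<forall>A. A \<subseteq> carrier (Zmod p) \<and> n \<le> card A \<longrightarrow> (\<exists>S\<subseteq>A. barycentric (Zmod p) k S)"
  proof (intro allI impI)
    fix A assume A: "A \<subseteq> carrier (Zmod p) \<and> n \<le> card A"
    then have AF: "A \<subseteq> {0..p-1}" by (simp add: Zmod_carrier)
    obtain T where T: "T \<subseteq> A" "card T = n"
      using A by (metis obtain_subset_with_card_n)
    then have "contains_bary p k A"
      using upper[of T] AF contains_bary_mono by blast
    then show "\<exists>S\<subseteq>A. barycentric (Zmod p) k S"
      using Zmod_barycentric_subset_iff[OF p AF] by blast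
  qed
next
  fix l
  assume "\<forall>A. A \<subseteq> carrier (Zmod p) \<and> l \<le> card A \<longrightarrow> (\<exists>S\<subseteq>A. barycentric (Zmod p) k S)"
  then have "l \<le> card B \<Longrightarrow> contains_bary p k B"
    using Zmod_barycentric_subset_iff[OF p lower(1)] lower(1) by (simp add: Zmod_carrier)
  then show "n \<le> l" using lower assms(3) by linarith
qed

lemma residue_eqI:
  fixes p x y :: int
  assumes "x \<in> {0..p-1}" "y \<in> {0..p-1}" "p dvd x - y"
  shows "x = y"
proof -
  have "x mod p = y mod p" using assms(3) by (simp add: mod_eq_dvd_iff)
  moreover have "x mod p = x" "y mod p = y" using assms(1,2) by auto
  ultimately show ?thesis by simp
qed

lemma affine_mod_inj:
  fixes p c e x y :: int
  assumes "Factorial_Ring.prime p" "\<not> p dvd c" "x \<in> {0..p-1}" "y \<in> {0..p-1}"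
    and "(c * x + e) mod p = (c * y + e) mod p"
  shows "x = y"
proof -
  have "p dvd (c * x + e) - (c * y + e)" using assms(5) by (simp add: mod_eq_dvd_iff)
  then have "p dvd c * (x - y)" by (simp add: algebra_simps)
  then have "p dvd x - y" using assms(1,2) by (simp add: prime_dvd_mult_iff)
  then show ?thesis using residue_eqI assms(3,4) by blast
qed

text \<open>If an affine map \<open>z \<mapsto> c z + e\<close> (c a unit) maps a set A of residues into itself,
  it permutes A, so summing over A gives \<open>\<Sum>A = c \<Sum>A + |A| e\<close> modulo p.\<close>

lemma affine_invariant_sum:
  fixes p c e :: int
  assumes "Factorial_Ring.prime p" "\<not> p dvd c" "A \<subseteq> {0..p-1}"
    and into: "\<And>z. z \<in> A \<Longrightarrow> (c * z + e) mod p \<in> A"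
  shows "p dvd (c - 1) * \<Sum>A + int (card A) * e"
proof -
  define h where "h z = (c * z + e) mod p" for z
  have fin: "finite A"
    using assms(3) by (rule finite_subset) simp
  have inj: "inj_on h A"
  proof (rule inj_onI)
    fix v w assume "v \<in> A" "w \<in> A" "h v = h w"
    then show "v = w"
      using affine_mod_inj[OF assms(1,2), of v w e] assms(3) unfolding h_def by blast
  qed
  have "h ` A \<subseteq> A" using into unfolding h_def by blast
  then have "h ` A = A" using endo_inj_surj[OF fin _ inj] by blast
  then have perm: "(\<Sum>z\<in>A. h z) = \<Sum>A"
    using sum.reindex[OF inj, of "\<lambda>x. x"] by simp
  have "p dvd (\<Sum>z\<in>A. (c * z + e) - h z)"
    by (rule dvd_sum) (simp add: h_def)
  also have "(\<Sum>z\<in>A. (c * z + e) - h z) = (c - 1) * \<Sum>A + int (card A) * e"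
    unfolding sum_subtractf sum.distrib perm
    by (simp add: sum_distrib_right[symmetric] algebra_simps)
  finally show ?thesis .
qed

lemma disjoint_image_card:
  assumes U: "finite U" "inj_on f U" "f ` U \<subseteq> U"
    and V: "V \<subseteq> U" "V \<inter> f ` V = {}"
  shows "2 * card V \<le> card U"
    and "2 * card V = card U \<Longrightarrow> f ` (U - V) \<subseteq> V"
proof -
  have finV: "finite V" using U(1) V(1) by (rule finite_subset[rotated])
  have card_union: "card (V \<union> f ` V) = 2 * card V"
    using card_Un_disjoint[OF finV finite_imageI[OF finV] V(2)]
      card_image[OF inj_on_subset[OF U(2) V(1)]] by simp
  moreover have sub: "V \<union> f ` V \<subseteq> U" using V(1) U(3) by blast
  ultimately show "2 * card V \<le> card U" using card_mono[OF U(1)] by metis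
  assume half: "2 * card V = card U"
  show "f ` (U - V) \<subseteq> V"
  proof
    fix y assume "y \<in> f ` (U - V)"
    then obtain x where x: "x \<in> U" "x \<notin> V" "y = f x" by blast
    have "V \<union> f ` V = U"
      using card_subset_eq[OF U(1) sub] card_union half by simp
    moreover have "y \<notin> f ` V"
      using x V(1) U(2) by (auto dest: inj_onD)
    ultimately show "y \<in> V" using x U(3) by blast
  qed
qed

text \<open>The homothety \<open>x \<mapsto> c + 2(x - c) = 2x - c\<close> of ratio 2 with centre c, on residues.\<close>

definition homothety :: "int \<Rightarrow> int \<Rightarrow> int \<Rightarrow> int" where
  "homothety p c x = (2 * x - c) mod p"

text \<open>The nonzero residues whose s-th power, reduced modulo p, lies in the lower half \<open>[1, k]\<close>.
  For suitable s these form a k-set of zero sum without barycentric k-subsets.\<close>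

definition lower_power_class :: "int \<Rightarrow> nat \<Rightarrow> nat \<Rightarrow> int set" where
  "lower_power_class p k s = {x \<in> {1..p-1}. x ^ s mod p \<le> int k}"

context
  fixes p :: int and k :: nat
  assumes prime_p: "Factorial_Ring.prime p" and p_eq: "p = 2 * int k + 1" and k_pos: "k \<ge> 1"
begin

lemma p_gt_1: "p > 1"
  using p_eq k_pos by simp

lemma mod_in_residues: "y mod p \<in> {0..p-1}"
  using p_gt_1 by simp

lemma nonzero_residue_not_dvd: "x \<in> {1..p-1} \<Longrightarrow> \<not> p dvd x"
  using zdvd_imp_le by fastforce

lemma nonzero_mod: "\<not> p dvd y \<Longrightarrow> y mod p \<in> {1..p-1}"
  using mod_in_residues[of y] by (auto simp: dvd_eq_mod_eq_0)

lemma two_not_dvd: "\<not> p dvd 2"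
  using nonzero_residue_not_dvd[of 2] p_eq k_pos by simp

subsection \<open>Sets of size k+1 without barycentric k-subsets\<close>

text \<open>Since 2 is a unit modulo p, the homothety maps residues injectively to residues.\<close>

lemma homothety_range: "homothety p c x \<in> {0..p-1}"
  unfolding homothety_def by (rule mod_in_residues)

lemma homothety_inj:
  "x \<in> {0..p-1} \<Longrightarrow> y \<in> {0..p-1} \<Longrightarrow> homothety p c x = homothety p c y \<Longrightarrow> x = y"
  using affine_mod_inj[OF prime_p two_not_dvd, of x y "-c"] by (simp add: homothety_def)

lemma homothety_fixed_iff:
  assumes "x \<in> {0..p-1}"
  shows "homothety p c x = x \<longleftrightarrow> x = c mod p"
proof -
  have "homothety p c x = x \<longleftrightarrow> (2 * x - c) mod p = x mod p"
    using assms by (simp add: homothety_def)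
  also have "\<dots> \<longleftrightarrow> p dvd (2 * x - c) - x"
    by (rule mod_eq_dvd_iff)
  also have "\<dots> \<longleftrightarrow> x mod p = c mod p"
    by (simp add: mod_eq_dvd_iff)
  also have "x mod p = x"
    using assms by simp
  finally show ?thesis .
qed

lemma homothety_inj_on: "inj_on (homothety p c) {0..p-1}"
  by (rule inj_onI) (rule homothety_inj)

lemma homothety_off_centre:
  assumes "x \<in> {0..p-1}" "x \<noteq> c mod p"
  shows "homothety p c x \<in> {0..p-1} - {c mod p}"
proof -
  have centre: "c mod p \<in> {0..p-1}" by (rule mod_in_residues)
  have fixed: "homothety p c (c mod p) = c mod p"
    using iffD2[OF homothety_fixed_iff[OF centre] refl] .
  have "homothety p c x \<noteq> c mod p"
  proof
    assume "homothety p c x = c mod p"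
    then have "homothety p c x = homothety p c (c mod p)" by (simp only: fixed)
    then show False using homothety_inj[OF assms(1) centre] assms(2) by blast
  qed
  then show ?thesis using homothety_range[of c x] by simp
qed

lemma homothety_iterate:
  assumes "x \<in> {0..p-1}"
  shows "(homothety p c ^^ j) x = (c + 2 ^ j * (x - c)) mod p"
proof (induction j)
  case 0
  then show ?case using assms by simp
next
  case (Suc j)
  have "(homothety p c ^^ Suc j) x = homothety p c ((c + 2 ^ j * (x - c)) mod p)"
    using Suc.IH by simp
  also have "\<dots> = (2 * ((c + 2 ^ j * (x - c)) mod p) - c) mod p"
    by (simp add: homothety_def)
  also have "\<dots> = (2 * (c + 2 ^ j * (x - c)) - c) mod p"
    by (metis mod_diff_left_eq mod_mult_right_eq)
  also have "2 * (c + 2 ^ j * (x - c)) - c = c + 2 ^ Suc j * (x - c)"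
    by (simp add: algebra_simps)
  finally show ?case .
qed

text \<open>Removing a from a (k+1)-set A leaves a k-set with sum \<open>\<Sum>A - a\<close>; it is barycentric
  with respect to g exactly when g is congruent to \<open>2a - 2\<Sum>A\<close>.\<close>

lemma bary_free_homothety_avoids:
  assumes A: "A \<subseteq> {0..p-1}" "card A = k + 1" and bad: "\<not> contains_bary p k A"
    and a: "a \<in> A" "a \<noteq> (2 * \<Sum>A) mod p"
  shows "homothety p (2 * \<Sum>A) a \<notin> A"
proof
  define g where "g = homothety p (2 * \<Sum>A) a"
  assume "g \<in> A"
  have "g \<noteq> a"
    using homothety_fixed_iff[of a "2 * \<Sum>A"] a A(1) unfolding g_def by blast
  have fin: "finite A"
    using A(1) by (rule finite_subset) simp
  have S: "A - {a} \<subseteq> A" "card (A - {a}) = k" "g \<in> A - {a}"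
    using A(2) a(1) \<open>g \<in> A\<close> \<open>g \<noteq> a\<close> fin by auto
  have "p dvd g - (2 * a - 2 * \<Sum>A)"
    by (simp add: g_def homothety_def mod_eq_dvd_iff[symmetric])
  also have "g - (2 * a - 2 * \<Sum>A) = g + 2 * \<Sum>(A - {a})"
    using fin a(1) by (simp add: sum_diff1 algebra_simps)
  finally have "contains_bary p k A"
    unfolding contains_bary_def using S by blast
  then show False using bad by blast
qed

text \<open>Indeed f permutes the 2k residues other than u and moves the at least k points of
  \<open>A - {u}\<close> off themselves, so \<open>A - {u}\<close> is exactly half of them.\<close>

lemma bary_free_swap:
  assumes A: "A \<subseteq> {0..p-1}" "card A = k + 1" and bad: "\<not> contains_bary p k A"
  defines "u \<equiv> (2 * \<Sum>A) mod p" and "f \<equiv> homothety p (2 * \<Sum>A)"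
  shows "u \<in> A" and "f ` (A - {u}) \<subseteq> {0..p-1} - A" and "f ` ({0..p-1} - A) \<subseteq> A - {u}"
proof -
  define U where "U = {0..p-1} - {u}"
  have finA: "finite A"
    using A(1) by (rule finite_subset) simp
  have finU: "finite U" by (simp add: U_def)
  have inj_U: "inj_on f U"
    using homothety_inj_on unfolding f_def by (rule inj_on_subset) (simp add: U_def)
  have f_U: "f ` U \<subseteq> U"
  proof
    fix y assume "y \<in> f ` U"
    then obtain x where "x \<in> U" "y = f x" by blast
    then have x: "x \<in> {0..p-1}" "x \<noteq> u" "y = f x" by (auto simp: U_def)
    show "y \<in> U"
      using homothety_off_centre[OF x(1) x(2)[unfolded u_def], folded f_def u_def] x(3)
      by (simp add: U_def)
  qed
  show avoid: "f ` (A - {u}) \<subseteq> {0..p-1} - A"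
  proof
    fix y assume "y \<in> f ` (A - {u})"
    then obtain a where a: "a \<in> A" "a \<noteq> u" "y = f a" by blast
    then show "y \<in> {0..p-1} - A"
      using bary_free_homothety_avoids[OF A bad a(1) a(2)[unfolded u_def], folded f_def]
        homothety_range[of "2 * \<Sum>A" a] by (simp add: f_def)
  qed
  have V: "A - {u} \<subseteq> U" "(A - {u}) \<inter> f ` (A - {u}) = {}"
    using A(1) avoid by (auto simp: U_def)
  have "u \<in> {0..p-1}" unfolding u_def by (rule mod_in_residues)
  then have card_U: "card U = 2 * k"
    using p_eq by (simp add: U_def)
  have "card (A - {u}) \<ge> k"
    using A(2) finA by (simp add: card_Diff_singleton_if)
  moreover have "2 * card (A - {u}) \<le> card U"
    by (rule disjoint_image_card(1)[OF finU inj_U f_U V])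
  ultimately have half: "2 * card (A - {u}) = card U"
    using card_U by linarith
  show "u \<in> A"
  proof (rule ccontr)
    assume "u \<notin> A"
    then have "card (A - {u}) = k + 1" using A(2) by simp
    then show False using half card_U by simp
  qed
  have "f ` (U - (A - {u})) \<subseteq> A - {u}"
    by (rule disjoint_image_card(2)[OF finU inj_U f_U V half])
  moreover have "U - (A - {u}) = {0..p-1} - A"
    using \<open>u \<in> A\<close> by (auto simp: U_def)
  ultimately show "f ` ({0..p-1} - A) \<subseteq> A - {u}" by simp
qed

subsection \<open>Upper bounds\<close>

text \<open>Upper bound when 2 has odd order t modulo p: following the orbit of some
  \<open>a \<in> A - {u}\<close> under the homothety f, the points alternate between \<open>A - {u}\<close> and the
  complement of A; but \<open>f\<^sup>t a = a\<close> since \<open>2\<^sup>t = 1\<close>, contradicting the parity of t.\<close>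

lemma odd_order_upper_bound:
  assumes t: "odd t" "p dvd 2 ^ t - 1" and A: "A \<subseteq> {0..p-1}" "card A = k + 1"
  shows "contains_bary p k A"
proof (rule ccontr)
  assume bad: "\<not> contains_bary p k A"
  define c where "c = 2 * \<Sum>A"
  define u where "u = c mod p"
  define f where "f = homothety p c"
  note swap = bary_free_swap[OF A bad, folded c_def, folded u_def f_def]
  have to_out: "f x \<in> {0..p-1} - A" if "x \<in> A - {u}" for x
    using swap(2) that by blast
  have to_in: "f x \<in> A - {u}" if "x \<in> {0..p-1} - A" for x
    using swap(3) that by blast
  have finA: "finite A"
    using A(1) by (rule finite_subset) simp
  have "card (A - {u}) \<ge> k"
    using A(2) finA by (simp add: card_Diff_singleton_if)
  then obtain a where a: "a \<in> A - {u}"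
    using k_pos by (metis all_not_in_conv card.empty le_zero_eq not_one_le_zero)
  have orbit: "(f ^^ j) a \<in> (if even j then A - {u} else {0..p-1} - A)" for j
  proof (induction j)
    case 0
    show ?case using a by simp
  next
    case (Suc j)
    show ?case
    proof (cases "even j")
      case True
      then show ?thesis using Suc.IH to_out by simp
    next
      case False
      then show ?thesis using Suc.IH to_in by simp
    qed
  qed
  have aF: "a \<in> {0..p-1}" using a A(1) by blast
  have "p dvd (2 ^ t - 1) * (a - c)"
    using t(2) by simp
  also have "(2 ^ t - 1) * (a - c) = (c + 2 ^ t * (a - c)) - a"
    by (simp add: algebra_simps)
  finally have "(c + 2 ^ t * (a - c)) mod p = a mod p"
    by (simp add: mod_eq_dvd_iff)
  then have "(f ^^ t) a = a"
    using homothety_iterate[OF aF] aF by (simp add: f_def)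
  then show False using orbit[of t] t(1) a by simp
qed

text \<open>Upper bound \<open>k + 2\<close>, valid for all p \<ge> 7: if a (k+2)-set A had no barycentric k-subset,
  then for every y outside A and every \<open>z \<in> A\<close>, applying the swap structure to \<open>A - {z}\<close>
  shows that the affine map \<open>z \<mapsto> 2z + 2y - 2\<Sum>A\<close> maps A into itself.
  Summing over A determines y modulo p, yet A misses at least two residues.\<close>

lemma upper_bound_k_plus_2:
  assumes k3: "k \<ge> 3" and A: "A \<subseteq> {0..p-1}" "card A = k + 2"
  shows "contains_bary p k A"
proof (rule ccontr)
  assume bad: "\<not> contains_bary p k A"
  have finA: "finite A"
    using A(1) by (rule finite_subset) simp
  have determined: "p dvd \<Sum>A + int (k + 2) * (2 * y - 2 * \<Sum>A)"
    if y: "y \<in> {0..p-1} - A" for y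
  proof -
    have into: "(2 * z + (2 * y - 2 * \<Sum>A)) mod p \<in> A" if z: "z \<in> A" for z
    proof -
      have Az: "A - {z} \<subseteq> {0..p-1}" "card (A - {z}) = k + 1"
        using A z finA by auto
      have "\<not> contains_bary p k (A - {z})"
        using bad contains_bary_mono by blast
      then have "homothety p (2 * \<Sum>(A - {z})) y \<in> A"
        using bary_free_swap(3)[OF Az] y by blast
      moreover have "2 * y - 2 * \<Sum>(A - {z}) = 2 * z + (2 * y - 2 * \<Sum>A)"
        using finA z by (simp add: sum_diff1 algebra_simps)
      ultimately show ?thesis by (simp add: homothety_def)
    qed
    show ?thesis
      using affine_invariant_sum[OF prime_p two_not_dvd A(1) into] A(2) by simp
  qed
  have "card ({0..p-1} - A) = k - 1"
    using A p_eq finA by (simp add: card_Diff_subset)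
  then have "card ({0..p-1} - A) \<ge> 2" using k3 by simp
  then obtain y1 y2 where y: "y1 \<in> {0..p-1} - A" "y2 \<in> {0..p-1} - A" "y1 \<noteq> y2"
    by (metis obtain_subset_with_card_n card_2_iff insert_subset)
  have "p dvd (\<Sum>A + int (k + 2) * (2 * y1 - 2 * \<Sum>A)) - (\<Sum>A + int (k + 2) * (2 * y2 - 2 * \<Sum>A))"
    using determined[OF y(1)] determined[OF y(2)] by (rule dvd_diff)
  also have "\<dots> = int (k + 2) * (2 * (y1 - y2))"
    by (simp add: algebra_simps)
  finally have "p dvd int (k + 2) * (2 * (y1 - y2))" .
  moreover have "\<not> p dvd int (k + 2)"
    using nonzero_residue_not_dvd[of "int (k + 2)"] p_eq k3 by simp
  ultimately have "p dvd 2 * (y1 - y2)"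
    using prime_p by (simp add: prime_dvd_mult_iff)
  then have "p dvd y1 - y2"
    using two_not_dvd prime_p prime_dvd_mult_iff by blast
  then show False using residue_eqI y by blast
qed

subsection \<open>Lower-bound constructions\<close>

lemma root_of_minus_one_not_dvd:
  assumes "p dvd m ^ s + 1"
  shows "\<not> p dvd m"
proof
  assume "p dvd m"
  show False
  proof (cases "s = 0")
    case True
    then show False using assms two_not_dvd by simp
  next
    case False
    then have "p dvd m ^ s" using \<open>p dvd m\<close> dvd_power[of s m] by (meson dvd_trans not_gr0)
    then have "p dvd 1" using assms by (simp add: dvd_add_right_iff)
    then show False using prime_p by (simp add: prime_int_iff)
  qed
qed

text \<open>If \<open>m\<^sup>s = -1\<close>, multiplication by m negates s-th powers, so it exchanges the lower
  power class with the rest of the nonzero residues.\<close>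

lemma lower_power_class_flip:
  assumes m: "p dvd m ^ s + 1" and x: "x \<in> {1..p-1}"
  shows "(m * x) mod p \<in> lower_power_class p k s \<longleftrightarrow> x \<notin> lower_power_class p k s"
proof -
  have x_pow: "\<not> p dvd x ^ s"
    using nonzero_residue_not_dvd[OF x] prime_p prime_dvd_power by blast
  have mx: "(m * x) mod p \<in> {1..p-1}"
    using nonzero_residue_not_dvd[OF x] root_of_minus_one_not_dvd[OF m] prime_p
    by (intro nonzero_mod) (simp add: prime_dvd_mult_iff)
  have "p dvd (m ^ s + 1) * x ^ s"
    using m by simp
  then have "(m ^ s * x ^ s) mod p = (- (x ^ s)) mod p"
    by (simp add: mod_eq_dvd_iff algebra_simps)
  then have "((m * x) mod p) ^ s mod p = p - x ^ s mod p"
    using x_pow by (simp add: power_mod power_mult_distrib zmod_zminus1_eq_if dvd_eq_mod_eq_0)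
  then show ?thesis
    using mx x p_eq by (auto simp: lower_power_class_def)
qed

text \<open>If \<open>c\<^sup>s = 1\<close>, multiplication by c preserves s-th powers and hence the class.\<close>

lemma lower_power_class_scale:
  assumes c: "p dvd c ^ s - 1" "\<not> p dvd c" and x: "x \<in> lower_power_class p k s"
  shows "(c * x) mod p \<in> lower_power_class p k s"
proof -
  have x1: "x \<in> {1..p-1}" using x by (simp add: lower_power_class_def)
  have "p dvd (c ^ s - 1) * x ^ s"
    using c(1) by simp
  then have "(c ^ s * x ^ s) mod p = x ^ s mod p"
    by (simp add: mod_eq_dvd_iff algebra_simps)
  then have "((c * x) mod p) ^ s mod p = x ^ s mod p"
    by (simp add: power_mod power_mult_distrib)
  moreover have "(c * x) mod p \<in> {1..p-1}"
    using nonzero_residue_not_dvd[OF x1] c(2) prime_p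
    by (intro nonzero_mod) (simp add: prime_dvd_mult_iff)
  ultimately show ?thesis using x by (simp add: lower_power_class_def)
qed

lemma lower_power_class_card:
  assumes m: "p dvd m ^ s + 1"
  shows "card (lower_power_class p k s) = k"
proof -
  define N where "N = {1..p-1}"
  define D where "D = lower_power_class p k s"
  define f where "f x = (m * x) mod p" for x
  have finX: "finite N" by (simp add: N_def)
  have D: "D \<subseteq> N" by (auto simp: D_def N_def lower_power_class_def)
  have inj: "inj_on f N"
  proof (rule inj_onI)
    fix x y assume "x \<in> N" "y \<in> N" "f x = f y"
    then show "x = y"
      using affine_mod_inj[OF prime_p root_of_minus_one_not_dvd[OF m], of x y 0]
      by (simp add: N_def f_def)
  qed
  have flip: "f x \<in> D \<longleftrightarrow> x \<notin> D" if "x \<in> N" for x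
    using lower_power_class_flip[OF m] that by (simp add: N_def f_def D_def)
  have fX: "f ` N \<subseteq> N"
    using nonzero_residue_not_dvd root_of_minus_one_not_dvd[OF m] prime_p
    by (auto simp: N_def f_def prime_dvd_mult_iff intro!: nonzero_mod)
  have "2 * card D \<le> card N"
    by (rule disjoint_image_card(1)[OF finX inj fX D]) (use flip D in blast)
  moreover have "2 * card (N - D) \<le> card N"
    by (rule disjoint_image_card(1)[OF finX inj fX]) (use flip in auto)
  moreover have "card D + card (N - D) = card N"
    using D finX by (metis card_Diff_subset card_mono finite_subset le_add_diff_inverse)
  moreover have "card N = 2 * k" using p_eq by (simp add: N_def)
  ultimately show ?thesis by (simp add: D_def)
qed

lemma lower_power_class_sum:
  assumes k2: "k \<ge> 2" and four: "p dvd 4 ^ s - 1"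
  shows "p dvd \<Sum>(lower_power_class p k s)"
proof -
  define D where "D = lower_power_class p k s"
  have not_dvd: "\<not> p dvd 4" "\<not> p dvd 3"
    using nonzero_residue_not_dvd[of 4] nonzero_residue_not_dvd[of 3] p_eq k2 by auto
  have "D \<subseteq> {0..p-1}" by (auto simp: D_def lower_power_class_def)
  then have "p dvd (4 - 1) * \<Sum>D + int (card D) * 0"
    using lower_power_class_scale[OF four not_dvd(1)]
    by (intro affine_invariant_sum[OF prime_p not_dvd(1)]) (simp_all add: D_def)
  then show ?thesis
    using not_dvd(2) prime_p by (simp add: prime_dvd_mult_iff D_def)
qed

text \<open>A k-set of nonzero residues with zero sum has no barycentric k-subset: the only
  candidate is the set itself, where the condition would force some \<open>g \<equiv> 0\<close>.\<close>

lemma zero_sum_bary_free: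
  assumes D: "D \<subseteq> {1..p-1}" "card D = k" "p dvd \<Sum>D"
  shows "\<not> contains_bary p k D"
proof
  assume "contains_bary p k D"
  then obtain S g where S: "S \<subseteq> D" "card S = k" "g \<in> S" "p dvd g + 2 * \<Sum>S"
    unfolding contains_bary_def by blast
  have "finite D" using D(1) by (rule finite_subset) simp
  then have "S = D" using card_subset_eq S(1,2) D(2) by metis
  then have "p dvd g" using S(4) D(3) by (simp add: dvd_add_left_iff)
  then show False using nonzero_residue_not_dvd S(1,3) D(1) by blast
qed

text \<open>Adding 0 to such a set D keeps it free of barycentric k-subsets, provided doubling
  maps D outside itself: removing \<open>a\<close> from \<open>D \<union> {0}\<close> would need \<open>g \<equiv> 2a\<close> in what remains.\<close>

lemma zero_sum_insert_zero_bary_free: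
  assumes D: "D \<subseteq> {1..p-1}" "card D = k" "p dvd \<Sum>D"
    and double: "\<And>x. x \<in> D \<Longrightarrow> (2 * x) mod p \<notin> D"
  shows "\<not> contains_bary p k (insert 0 D)"
proof
  define B where "B = insert 0 D"
  assume "contains_bary p k (insert 0 D)"
  then obtain S g where S: "S \<subseteq> B" "card S = k" "g \<in> S" "p dvd g + 2 * \<Sum>S"
    unfolding contains_bary_def B_def by blast
  have finD: "finite D" using D(1) by (rule finite_subset) simp
  have "0 \<notin> D" using D(1) by auto
  then have finB: "finite B" and cB: "card B = k + 1" and sB: "\<Sum>B = \<Sum>D"
    using finD D(2) by (simp_all add: B_def)
  have "\<not> B \<subseteq> S"
  proof
    assume "B \<subseteq> S"
    then have "card B \<le> card S" using card_mono finite_subset[OF S(1) finB] by blast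
    then show False using S(2) cB by simp
  qed
  then obtain a where a: "a \<in> B" "a \<notin> S" by blast
  have "S = B - {a}"
    using card_subset_eq[of "B - {a}" S] S(1,2) a finB cB by auto
  then have "\<Sum>S = \<Sum>D - a" using sB finB a(1) by (simp add: sum_diff1)
  then have "g - 2 * a = (g + 2 * \<Sum>S) - 2 * \<Sum>D" by simp
  moreover have "p dvd (g + 2 * \<Sum>S) - 2 * \<Sum>D"
    using S(4) D(3) by (intro dvd_diff dvd_mult)
  ultimately have ga: "p dvd g - 2 * a" by metis
  have gB: "g \<in> B" "g \<noteq> a" using S(1,3) a(2) by auto
  show False
  proof (cases "a = 0")
    case True
    then show False using ga gB nonzero_residue_not_dvd D(1) by (auto simp: B_def)
  next
    case False
    then have aD: "a \<in> D" using a(1) by (simp add: B_def)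
    have "g \<in> {0..p-1}" using gB(1) D(1) p_gt_1 by (auto simp: B_def)
    then have "g = g mod p" by simp
    also have "\<dots> = (2 * a) mod p" using ga mod_eq_dvd_iff by blast
    finally have "g = (2 * a) mod p" .
    then have "g = 0" using double[OF aD] gB(1) by (simp add: B_def)
    then have "p dvd 2 * a" using ga by simp
    then show False
      using two_not_dvd prime_p prime_dvd_mult_iff nonzero_residue_not_dvd aD D(1) by blast
  qed
qed

text \<open>If 2 has odd order t, then \<open>BO = k + 1\<close>; the lower bound uses the power class
  for any s with \<open>m\<^sup>s = -1\<close> and \<open>4\<^sup>s = 1\<close> (for instance s = k and m a primitive root).\<close>

lemma BO_odd_order:
  assumes k3: "k \<ge> 3" and t: "odd t" "p dvd 2 ^ t - 1"
    and s: "p dvd m ^ s + 1" "p dvd 4 ^ s - 1"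
  shows "BO k (Zmod p) = k + 1"
proof (rule BO_Zmod_eqI[OF p_eq k_pos, where B = "lower_power_class p k s"])
  show "\<And>A. A \<subseteq> {0..p-1} \<Longrightarrow> card A = k + 1 \<Longrightarrow> contains_bary p k A"
    using odd_order_upper_bound[OF t] by blast
  show "lower_power_class p k s \<subseteq> {0..p-1}"
    by (auto simp: lower_power_class_def)
  show "card (lower_power_class p k s) = k + 1 - 1"
    using lower_power_class_card[OF s(1)] by simp
  show "\<not> contains_bary p k (lower_power_class p k s)"
    using lower_power_class_card[OF s(1)] lower_power_class_sum[OF _ s(2)] k3
    by (intro zero_sum_bary_free) (auto simp: lower_power_class_def)
qed simp

text \<open>If \<open>2\<^sup>s = -1\<close> for some s (which happens exactly when 2 has even order), then
  \<open>BO = k + 2\<close>; the witness is the power class together with 0, as doubling exchanges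
  the power class with its complement.\<close>

lemma BO_even_order:
  assumes k3: "k \<ge> 3" and s: "p dvd 2 ^ s + 1" "p dvd 4 ^ s - 1"
  shows "BO k (Zmod p) = k + 2"
proof (rule BO_Zmod_eqI[OF p_eq k_pos, where B = "insert 0 (lower_power_class p k s)"])
  let ?D = "lower_power_class p k s"
  have D: "?D \<subseteq> {1..p-1}" by (auto simp: lower_power_class_def)
  show "\<And>A. A \<subseteq> {0..p-1} \<Longrightarrow> card A = k + 2 \<Longrightarrow> contains_bary p k A"
    using upper_bound_k_plus_2[OF k3] by blast
  show "insert 0 ?D \<subseteq> {0..p-1}"
    using D p_gt_1 by auto
  have "0 \<notin> ?D" "finite ?D"
    using D by (auto intro: finite_subset)
  then show "card (insert 0 ?D) = k + 2 - 1"
    using lower_power_class_card[OF s(1)] by simp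
  show "\<not> contains_bary p k (insert 0 ?D)"
  proof (rule zero_sum_insert_zero_bary_free[OF D])
    show "card ?D = k" by (rule lower_power_class_card[OF s(1)])
    show "p dvd \<Sum>?D" using lower_power_class_sum[OF _ s(2)] k3 by simp
    show "(2 * x) mod p \<notin> ?D" if "x \<in> ?D" for x
      using lower_power_class_flip[OF s(1)] that D by blast
  qed
qed simp

end

lemma cong_one_iff_dvd: "[a = 1] (mod n) \<longleftrightarrow> int n dvd int a - 1"
  by (metis cong_int_iff cong_iff_dvd_diff of_nat_1)

text \<open>An element of even order 2s modulo a prime is a square root of 1 other than 1,
  hence its s-th power is -1.\<close>

lemma half_order_power_minus_one:
  fixes p a s :: nat
  assumes "Factorial_Ring.prime p" "ord p a = 2 * s" "s > 0"
  shows "int p dvd int a ^ s + 1"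
proof -
  have "[a ^ (2 * s) = 1] (mod p)"
    using ord_works[of a p] assms(2) by simp
  then have "int p dvd int a ^ (2 * s) - 1"
    by (metis cong_one_iff_dvd of_nat_power)
  also have "int a ^ (2 * s) - 1 = (int a ^ s - 1) * (int a ^ s + 1)"
    by (simp add: power_mult power2_eq_square algebra_simps)
  finally have "int p dvd (int a ^ s - 1) * (int a ^ s + 1)" .
  moreover have "\<not> [a ^ s = 1] (mod p)"
    using ord_minimal[of s p a] assms(2,3) by simp
  then have "\<not> int p dvd int a ^ s - 1"
    by (metis cong_one_iff_dvd of_nat_power)
  ultimately show ?thesis
    using assms(1) by (simp add: prime_dvd_mult_iff)
qed

text \<open>For a prime p = 2k+1, a primitive root m satisfies \<open>m\<^sup>k = -1\<close>, and \<open>4\<^sup>k = 2\<^sup>p\<^sup>-\<^sup>1 = 1\<close>.\<close>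

lemma prime_half_powers:
  fixes p k :: nat
  assumes "Factorial_Ring.prime p" "p = 2 * k + 1" "k > 0"
  shows "\<exists>m. int p dvd int m ^ k + 1" and "int p dvd 4 ^ k - 1"
proof -
  obtain g where "residue_primroot p g"
    using prime_primitive_root_exists assms(1) prime_gt_1_nat by blast
  then have "ord p g = 2 * k"
    using assms(1,2) by (simp add: residue_primroot_def totient_prime)
  then show "\<exists>m. int p dvd int m ^ k + 1"
    using half_order_power_minus_one assms(1,3) by blast
  have "\<not> p dvd 2" using assms(2,3) by (auto dest: dvd_imp_le)
  then have "[2 ^ (p - 1) = 1] (mod p)" by (rule fermat_theorem[OF assms(1)])
  then have "int p dvd 2 ^ (2 * k) - 1"
    using assms(2) by (metis cong_one_iff_dvd of_nat_numeral of_nat_power add_diff_cancel_right')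
  then show "int p dvd 4 ^ k - 1" by (simp add: power_mult)
qed

lemma even_order_two_powers:
  fixes p :: nat
  assumes "Factorial_Ring.prime p" "odd p" "even (ord p 2)"
  shows "\<exists>s. int p dvd 2 ^ s + 1 \<and> int p dvd 4 ^ s - 1"
proof -
  obtain s where s1: "ord p 2 = 2 * s" using assms(3) by (rule evenE)
  have "coprime p 2" using assms(2) by simp
  then have "ord p 2 > 0" by simp
  then have s: "ord p 2 = 2 * s" "s > 0" using s1 by simp_all
  have "[2 ^ ord p 2 = 1] (mod p)" by (rule ord_works[THEN conjunct1])
  then have "int p dvd 2 ^ (2 * s) - 1"
    using s(1) by (metis cong_one_iff_dvd of_nat_numeral of_nat_power)
  then have "int p dvd 4 ^ s - 1" by (simp add: power_mult)
  then show ?thesis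
    using half_order_power_minus_one[OF assms(1) s] by auto
qed

theorem mainTheorem7:
  fixes p :: nat
  assumes "Factorial_Ring.prime p" and "p \<ge> 7"
  defines "k \<equiv> (p - 1) div 2"
  shows "(odd (ord p 2) \<longrightarrow> BO k (Zmod (int p)) = k + 1) \<and>
         (even (ord p 2) \<longrightarrow> BO k (Zmod (int p)) = k + 2)"
proof -
  have "odd p" using prime_odd_nat[OF assms(1)] assms(2) by simp
  then have p_eq: "p = 2 * k + 1" and k3: "k \<ge> 3" and P_eq: "int p = 2 * int k + 1"
    using assms(2) by (auto simp: k_def elim!: oddE)
  have prime_P: "Factorial_Ring.prime (int p)" using assms(1) by simp
  have "BO k (Zmod (int p)) = k + 1" if "odd (ord p 2)"
  proof -
    have "int p dvd 2 ^ ord p 2 - 1"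
      using ord_works[of 2 p] by (metis cong_one_iff_dvd of_nat_numeral of_nat_power)
    moreover obtain m where "int p dvd int m ^ k + 1"
      using prime_half_powers(1)[OF assms(1) p_eq] k3 by auto
    ultimately show ?thesis
      using BO_odd_order[OF prime_P P_eq] prime_half_powers(2)[OF assms(1) p_eq] that k3 by simp
  qed
  moreover have "BO k (Zmod (int p)) = k + 2" if "even (ord p 2)"
    using even_order_two_powers[OF assms(1) \<open>odd p\<close> that] BO_even_order[OF prime_P P_eq] k3
    by auto
  ultimately show ?thesis by blast
qed

end
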